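(* Let $\mathcal{A},\mathcal{A}'$ be abelian categories with amplitudes $\alpha,\alpha'$, and let $F\colon\mathcal{A}\to\mathcal{A}'$ be an exact functor such that $\alpha'(F(A))\le K\alpha(A)$ for all $A\in\operatorname{ob}\mathcal{A}$, for some $K\ge0$. Then $\mathrm{d}_{\alpha'}(F(A),F(B))\le K\,\mathrm{d}_\alpha(A,B)$ for all $A,B\in\operatorname{ob}\mathcal{A}$.
   Context: An amplitude on an abelian category $\mathcal{A}$ is a function $\alpha\colon\operatorname{ob}\mathcal{A}\to[0,\infty]$ with $\alpha(0)=0$ such that for every short exact sequence $0\to A\to B\to C\to0$, $\alpha(A)\le\alpha(B)$, $\alpha(C)\le\alpha(B)$ and $\alpha(B)\le\alpha(A)+\alpha(C)$. The path metric $\mathrm{d}_\alpha(A,B)$ is the infimum, over zigzags $A\xleftarrow{\gamma_1}C_1\xrightarrow{\gamma_2}\cdots\xrightarrow{\gamma_n}B$, of $\sum_i\alpha(\ker\gamma_i)+\alpha(\operatorname{coker}\gamma_i)$ ($\inf\emptyset=\infty$). *)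

theory Defs
  imports "HOL-Library.Extended_Nonnegative_Real"
begin

record ('o, 'm) cat =
  cOb   :: "'o set"
  cAr   :: "'m set"
  cDom  :: "'m \<Rightarrow> 'o"
  cCod  :: "'m \<Rightarrow> 'o"
  cId   :: "'o \<Rightarrow> 'm"
  cComp :: "'m \<Rightarrow> 'm \<Rightarrow> 'm"   (* cComp C g f  =  g \<circ> f *)

definition hom :: "('o,'m) cat \<Rightarrow> 'o \<Rightarrow> 'o \<Rightarrow> 'm set" where
  "hom C a b = {f \<in> cAr C. cDom C f = a \<and> cCod C f = b}"

definition category :: "('o,'m) cat \<Rightarrow> bool" where
  "category C \<longleftrightarrow>
     (\<forall>f\<in>cAr C. cDom C f \<in> cOb C \<and> cCod C f \<in> cOb C) \<and>
     (\<forall>a\<in>cOb C. cId C a \<in> hom C a a) \<and>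
     (\<forall>f\<in>cAr C. \<forall>g\<in>cAr C. cCod C f = cDom C g \<longrightarrow>
         cComp C g f \<in> hom C (cDom C f) (cCod C g)) \<and>
     (\<forall>f\<in>cAr C. cComp C (cId C (cCod C f)) f = f \<and> cComp C f (cId C (cDom C f)) = f) \<and>
     (\<forall>f\<in>cAr C. \<forall>g\<in>cAr C. \<forall>h\<in>cAr C. cCod C f = cDom C g \<and> cCod C g = cDom C h \<longrightarrow>
         cComp C h (cComp C g f) = cComp C (cComp C h g) f)"

definition zero_obj :: "('o,'m) cat \<Rightarrow> 'o \<Rightarrow> bool" where
  "zero_obj C z \<longleftrightarrow> z \<in> cOb C \<and>
     (\<forall>a\<in>cOb C. (\<exists>!f. f \<in> hom C a z) \<and> (\<exists>!f. f \<in> hom C z a))"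

definition zero_arr :: "('o,'m) cat \<Rightarrow> 'm \<Rightarrow> bool" where
  "zero_arr C f \<longleftrightarrow> f \<in> cAr C \<and>
     (\<exists>z. zero_obj C z \<and> (\<exists>g\<in>hom C (cDom C f) z. \<exists>h\<in>hom C z (cCod C f). f = cComp C h g))"

definition mono :: "('o,'m) cat \<Rightarrow> 'm \<Rightarrow> bool" where
  "mono C f \<longleftrightarrow> f \<in> cAr C \<and>
     (\<forall>g\<in>cAr C. \<forall>h\<in>cAr C. cCod C g = cDom C f \<and> cCod C h = cDom C f \<and> cDom C g = cDom C h \<and>
        cComp C f g = cComp C f h \<longrightarrow> g = h)"

definition epi :: "('o,'m) cat \<Rightarrow> 'm \<Rightarrow> bool" where
  "epi C f \<longleftrightarrow> f \<in> cAr C \<and>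
     (\<forall>g\<in>cAr C. \<forall>h\<in>cAr C. cDom C g = cCod C f \<and> cDom C h = cCod C f \<and> cCod C g = cCod C h \<and>
        cComp C g f = cComp C h f \<longrightarrow> g = h)"

definition is_kernel :: "('o,'m) cat \<Rightarrow> 'm \<Rightarrow> 'm \<Rightarrow> bool" where
  "is_kernel C k f \<longleftrightarrow> f \<in> cAr C \<and> k \<in> cAr C \<and> cCod C k = cDom C f \<and>
     zero_arr C (cComp C f k) \<and>
     (\<forall>x\<in>cAr C. cCod C x = cDom C f \<and> zero_arr C (cComp C f x) \<longrightarrow>
        (\<exists>!u. u \<in> hom C (cDom C x) (cDom C k) \<and> cComp C k u = x))"

definition is_cokernel :: "('o,'m) cat \<Rightarrow> 'm \<Rightarrow> 'm \<Rightarrow> bool" where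
  "is_cokernel C c f \<longleftrightarrow> f \<in> cAr C \<and> c \<in> cAr C \<and> cDom C c = cCod C f \<and>
     zero_arr C (cComp C c f) \<and>
     (\<forall>x\<in>cAr C. cDom C x = cCod C f \<and> zero_arr C (cComp C x f) \<longrightarrow>
        (\<exists>!u. u \<in> hom C (cCod C c) (cCod C x) \<and> cComp C u c = x))"

definition has_binary_products :: "('o,'m) cat \<Rightarrow> bool" where
  "has_binary_products C \<longleftrightarrow> (\<forall>a\<in>cOb C. \<forall>b\<in>cOb C. \<exists>p\<in>cOb C. \<exists>p1\<in>hom C p a. \<exists>p2\<in>hom C p b.
     \<forall>x\<in>cOb C. \<forall>f\<in>hom C x a. \<forall>g\<in>hom C x b.
       \<exists>!u. u \<in> hom C x p \<and> cComp C p1 u = f \<and> cComp C p2 u = g)"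

definition has_binary_coproducts :: "('o,'m) cat \<Rightarrow> bool" where
  "has_binary_coproducts C \<longleftrightarrow> (\<forall>a\<in>cOb C. \<forall>b\<in>cOb C. \<exists>s\<in>cOb C. \<exists>i1\<in>hom C a s. \<exists>i2\<in>hom C b s.
     \<forall>x\<in>cOb C. \<forall>f\<in>hom C a x. \<forall>g\<in>hom C b x.
       \<exists>!u. u \<in> hom C s x \<and> cComp C u i1 = f \<and> cComp C u i2 = g)"

text \<open>Abelian category (Freyd's characterisation): zero object, binary products and
  coproducts, kernels and cokernels, every mono is a kernel and every epi is a cokernel.\<close>
definition abelian :: "('o,'m) cat \<Rightarrow> bool" where
  "abelian C \<longleftrightarrow> category C \<and> (\<exists>z. zero_obj C z) \<and>
     has_binary_products C \<and> has_binary_coproducts C \<and>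
     (\<forall>f\<in>cAr C. \<exists>k. is_kernel C k f) \<and> (\<forall>f\<in>cAr C. \<exists>c. is_cokernel C c f) \<and>
     (\<forall>f. mono C f \<longrightarrow> (\<exists>g. is_kernel C f g)) \<and>
     (\<forall>f. epi C f \<longrightarrow> (\<exists>g. is_cokernel C f g))"

definition ses :: "('o,'m) cat \<Rightarrow> 'm \<Rightarrow> 'm \<Rightarrow> bool" where
  "ses C f g \<longleftrightarrow> is_kernel C f g \<and> is_cokernel C g f"

definition amplitude :: "('o,'m) cat \<Rightarrow> ('o \<Rightarrow> ennreal) \<Rightarrow> bool" where
  "amplitude C \<alpha> \<longleftrightarrow> (\<forall>z. zero_obj C z \<longrightarrow> \<alpha> z = 0) \<and>
     (\<forall>f g. ses C f g \<longrightarrow>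
        \<alpha> (cDom C f) \<le> \<alpha> (cDom C g) \<and> \<alpha> (cCod C g) \<le> \<alpha> (cDom C g) \<and>
        \<alpha> (cDom C g) \<le> \<alpha> (cDom C f) + \<alpha> (cCod C g))"

text \<open>amplitude of ker and coker of an arrow (well defined up to iso; a chosen
  kernel / cokernel is used)\<close>
definition arr_cost :: "('o,'m) cat \<Rightarrow> ('o \<Rightarrow> ennreal) \<Rightarrow> 'm \<Rightarrow> ennreal" where
  "arr_cost C \<alpha> \<gamma> = \<alpha> (cDom C (SOME k. is_kernel C k \<gamma>)) + \<alpha> (cCod C (SOME c. is_cokernel C c \<gamma>))"

definition is_zigzag :: "('o,'m) cat \<Rightarrow> 'o \<Rightarrow> 'o \<Rightarrow> 'o list \<Rightarrow> 'm list \<Rightarrow> bool" where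
  "is_zigzag C A B xs gs \<longleftrightarrow> length xs = Suc (length gs) \<and> xs ! 0 = A \<and> xs ! length gs = B \<and>
     (\<forall>i<length gs. gs ! i \<in> cAr C \<and>
        ((cDom C (gs ! i) = xs ! i \<and> cCod C (gs ! i) = xs ! Suc i) \<or>
         (cDom C (gs ! i) = xs ! Suc i \<and> cCod C (gs ! i) = xs ! i)))"

definition path_dist :: "('o,'m) cat \<Rightarrow> ('o \<Rightarrow> ennreal) \<Rightarrow> 'o \<Rightarrow> 'o \<Rightarrow> ennreal" where
  "path_dist C \<alpha> A B = (INF gs \<in> {gs. \<exists>xs. is_zigzag C A B xs gs}. sum_list (map (arr_cost C \<alpha>) gs))"

definition is_functor :: "('o,'m) cat \<Rightarrow> ('p,'n) cat \<Rightarrow> ('o \<Rightarrow> 'p) \<Rightarrow> ('m \<Rightarrow> 'n) \<Rightarrow> bool" where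
  "is_functor C D Fo Fm \<longleftrightarrow>
     (\<forall>a\<in>cOb C. Fo a \<in> cOb D \<and> Fm (cId C a) = cId D (Fo a)) \<and>
     (\<forall>f\<in>cAr C. Fm f \<in> hom D (Fo (cDom C f)) (Fo (cCod C f))) \<and>
     (\<forall>f\<in>cAr C. \<forall>g\<in>cAr C. cCod C f = cDom C g \<longrightarrow> Fm (cComp C g f) = cComp D (Fm g) (Fm f))"

definition exact_functor :: "('o,'m) cat \<Rightarrow> ('p,'n) cat \<Rightarrow> ('o \<Rightarrow> 'p) \<Rightarrow> ('m \<Rightarrow> 'n) \<Rightarrow> bool" where
  "exact_functor C D Fo Fm \<longleftrightarrow> is_functor C D Fo Fm \<and>
     (\<forall>f g. ses C f g \<longrightarrow> ses D (Fm f) (Fm g))"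

end

(*
  The cost alpha(ker f) + alpha(coker f) of an arrow does not depend on the chosen kernel and
  cokernel, because amplitudes are invariant under isomorphism: an isomorphism u : a -> b gives the
  short exact sequence 0 -> a -> b -> 0 -> 0. An exact functor F preserves kernels and cokernels:
  factoring f = m e through its image yields short exact sequences 0 -> ker f -> A -> im f -> 0 and
  0 -> im f -> B -> coker f -> 0, F keeps them exact, and as F m is mono and F e is epi, F(ker f) is
  a kernel and F(coker f) a cokernel of F f. So F maps each zigzag from A to B to a zigzag from F A
  to F B whose cost is at most K times the original one, and the bound follows by taking infima.
  In Freyd's axiomatization the only nontrivial point is that e is epi; it follows from the
  minimality of the image, tested against equalizers, which are built from products and kernels.
*)
theory Submission
  imports Defs
begin

section \<open>Categories with a zero object\<close>

definition isomorphic :: "('o,'m) cat \<Rightarrow> 'o \<Rightarrow> 'o \<Rightarrow> bool" where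
  "isomorphic C a b \<longleftrightarrow>
     (\<exists>u\<in>hom C a b. \<exists>v\<in>hom C b a. cComp C v u = cId C a \<and> cComp C u v = cId C b)"

lemma isomorphic_sym: "isomorphic C a b \<Longrightarrow> isomorphic C b a"
  unfolding isomorphic_def by blast

locale pointed_category =
  fixes C :: "('o,'m) cat"
  assumes category: "category C" and zero_obj_exists: "\<exists>z. zero_obj C z"
begin

abbreviation arr_comp (infixr "\<cdot>" 55) where "g \<cdot> f \<equiv> cComp C g f"

lemma dom_in_ob [simp]: "f \<in> cAr C \<Longrightarrow> cDom C f \<in> cOb C"
  and cod_in_ob [simp]: "f \<in> cAr C \<Longrightarrow> cCod C f \<in> cOb C"
  using category unfolding category_def by blast+

lemma comp_in_arr [simp]: "f \<in> cAr C \<Longrightarrow> g \<in> cAr C \<Longrightarrow> cCod C f = cDom C g \<Longrightarrow> g \<cdot> f \<in> cAr C"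
  and dom_comp [simp]: "f \<in> cAr C \<Longrightarrow> g \<in> cAr C \<Longrightarrow> cCod C f = cDom C g \<Longrightarrow> cDom C (g \<cdot> f) = cDom C f"
  and cod_comp [simp]: "f \<in> cAr C \<Longrightarrow> g \<in> cAr C \<Longrightarrow> cCod C f = cDom C g \<Longrightarrow> cCod C (g \<cdot> f) = cCod C g"
  using category unfolding category_def hom_def by blast+

lemma id_in_arr [simp]: "a \<in> cOb C \<Longrightarrow> cId C a \<in> cAr C"
  and dom_id [simp]: "a \<in> cOb C \<Longrightarrow> cDom C (cId C a) = a"
  and cod_id [simp]: "a \<in> cOb C \<Longrightarrow> cCod C (cId C a) = a"
  using category unfolding category_def hom_def by blast+

lemma comp_id_left [simp]: "f \<in> cAr C \<Longrightarrow> cCod C f = b \<Longrightarrow> cId C b \<cdot> f = f"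
  and comp_id_right [simp]: "f \<in> cAr C \<Longrightarrow> cDom C f = a \<Longrightarrow> f \<cdot> cId C a = f"
  using category unfolding category_def by blast+

lemma comp_assoc:
  "f \<in> cAr C \<Longrightarrow> g \<in> cAr C \<Longrightarrow> h \<in> cAr C \<Longrightarrow> cCod C f = cDom C g \<Longrightarrow> cCod C g = cDom C h \<Longrightarrow>
   h \<cdot> (g \<cdot> f) = (h \<cdot> g) \<cdot> f"
  using category unfolding category_def by blast

lemma mono_cancel:
  "mono C m \<Longrightarrow> g \<in> cAr C \<Longrightarrow> h \<in> cAr C \<Longrightarrow> cCod C g = cDom C m \<Longrightarrow> cCod C h = cDom C m \<Longrightarrow>
   cDom C g = cDom C h \<Longrightarrow> m \<cdot> g = m \<cdot> h \<Longrightarrow> g = h"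
  unfolding mono_def by blast

lemma epi_cancel:
  "epi C e \<Longrightarrow> g \<in> cAr C \<Longrightarrow> h \<in> cAr C \<Longrightarrow> cDom C g = cCod C e \<Longrightarrow> cDom C h = cCod C e \<Longrightarrow>
   cCod C g = cCod C h \<Longrightarrow> g \<cdot> e = h \<cdot> e \<Longrightarrow> g = h"
  unfolding epi_def by blast

lemma mono_if_left_inverse:
  assumes "d \<in> cAr C" "r \<in> cAr C" "cCod C d = cDom C r" "r \<cdot> d = cId C (cDom C d)"
  shows "mono C d"
  unfolding mono_def
proof (intro conjI ballI impI)
  fix g h assume g: "g \<in> cAr C" and h: "h \<in> cAr C" and
    eq: "cCod C g = cDom C d \<and> cCod C h = cDom C d \<and> cDom C g = cDom C h \<and> d \<cdot> g = d \<cdot> h"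
  have "g = (r \<cdot> d) \<cdot> g" using assms g eq by simp
  also have "\<dots> = (r \<cdot> d) \<cdot> h" using assms g h eq by (metis comp_assoc)
  also have "\<dots> = h" using assms h eq by simp
  finally show "g = h" .
qed (fact assms)

lemma mono_comp:
  assumes a: "mono C a" and b: "mono C b" and ab: "cCod C a = cDom C b"
  shows "mono C (b \<cdot> a)"
  unfolding mono_def
proof (intro conjI ballI impI)
  have "a \<in> cAr C" "b \<in> cAr C" using a b unfolding mono_def by blast+
  then show "b \<cdot> a \<in> cAr C" using ab by simp
  fix g h assume g: "g \<in> cAr C" and h: "h \<in> cAr C"
    and "cCod C g = cDom C (b \<cdot> a) \<and> cCod C h = cDom C (b \<cdot> a) \<and> cDom C g = cDom C h \<and>
      (b \<cdot> a) \<cdot> g = (b \<cdot> a) \<cdot> h"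
  then have types: "cCod C g = cDom C a" "cCod C h = cDom C a" "cDom C g = cDom C h"
    and eq: "(b \<cdot> a) \<cdot> g = (b \<cdot> a) \<cdot> h" using \<open>a \<in> cAr C\<close> \<open>b \<in> cAr C\<close> ab by auto
  have "b \<cdot> (a \<cdot> g) = b \<cdot> (a \<cdot> h)"
    using eq comp_assoc[of g a b] comp_assoc[of h a b] g h types ab \<open>a \<in> cAr C\<close> \<open>b \<in> cAr C\<close> by simp
  then have "a \<cdot> g = a \<cdot> h"
    by (rule mono_cancel[OF b, rotated -1]) (use g h types ab \<open>a \<in> cAr C\<close> in simp_all)
  then show "g = h" by (rule mono_cancel[OF a, rotated -1]) (use g h types in simp_all)
qed

lemma zero_obj_in_ob: "zero_obj C z \<Longrightarrow> z \<in> cOb C"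
  unfolding zero_obj_def by blast

lemma arr_to_zero_unique:
  "zero_obj C z \<Longrightarrow> f \<in> cAr C \<Longrightarrow> g \<in> cAr C \<Longrightarrow> cDom C f = cDom C g \<Longrightarrow>
   cCod C f = z \<Longrightarrow> cCod C g = z \<Longrightarrow> f = g"
  unfolding zero_obj_def hom_def by (metis (mono_tags, lifting) dom_in_ob mem_Collect_eq)

lemma arr_from_zero_unique:
  "zero_obj C z \<Longrightarrow> f \<in> cAr C \<Longrightarrow> g \<in> cAr C \<Longrightarrow> cCod C f = cCod C g \<Longrightarrow>
   cDom C f = z \<Longrightarrow> cDom C g = z \<Longrightarrow> f = g"
  unfolding zero_obj_def hom_def by (metis (mono_tags, lifting) cod_in_ob mem_Collect_eq)

lemma arr_to_zero_exists:
  assumes "zero_obj C z" "a \<in> cOb C"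
  obtains f where "f \<in> cAr C" "cDom C f = a" "cCod C f = z"
  using assms unfolding zero_obj_def hom_def by blast

lemma arr_from_zero_exists:
  assumes "zero_obj C z" "a \<in> cOb C"
  obtains f where "f \<in> cAr C" "cDom C f = z" "cCod C f = a"
  using assms unfolding zero_obj_def hom_def by blast

lemma zero_arrI:
  "zero_obj C z \<Longrightarrow> g \<in> cAr C \<Longrightarrow> h \<in> cAr C \<Longrightarrow> cCod C g = z \<Longrightarrow> cDom C h = z \<Longrightarrow> zero_arr C (h \<cdot> g)"
  unfolding zero_arr_def hom_def by auto

lemma zero_arrE:
  assumes "zero_arr C f"
  obtains z g h where "zero_obj C z" "g \<in> cAr C" "h \<in> cAr C" "cDom C g = cDom C f" "cCod C g = z"
    "cDom C h = z" "cCod C h = cCod C f" "h \<cdot> g = f"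
  using assms unfolding zero_arr_def hom_def by auto

lemma zero_arr_in_arr [simp]: "zero_arr C f \<Longrightarrow> f \<in> cAr C"
  unfolding zero_arr_def by blast

lemma zero_arr_if_cod_zero_obj:
  assumes "zero_obj C z" "f \<in> cAr C" "cCod C f = z"
  shows "zero_arr C f"
proof -
  have "z \<in> cOb C" using assms(1) by (rule zero_obj_in_ob)
  then show ?thesis using zero_arrI[OF assms(1,2) id_in_arr[OF \<open>z \<in> cOb C\<close>]] assms by simp
qed

lemma zero_arr_unique:
  assumes "zero_arr C f" "zero_arr C f'" "cDom C f = cDom C f'" "cCod C f = cCod C f'"
  shows "f = f'"
proof -
  obtain z g h where f: "zero_obj C z" "g \<in> cAr C" "h \<in> cAr C" "cDom C g = cDom C f" "cCod C g = z"
    "cDom C h = z" "cCod C h = cCod C f" "h \<cdot> g = f" using assms(1) by (rule zero_arrE)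
  obtain z' g' h' where f': "zero_obj C z'" "g' \<in> cAr C" "h' \<in> cAr C" "cDom C g' = cDom C f'"
    "cCod C g' = z'" "cDom C h' = z'" "cCod C h' = cCod C f'" "h' \<cdot> g' = f'" using assms(2) by (rule zero_arrE)
  obtain i where i: "i \<in> cAr C" "cDom C i = z" "cCod C i = z'"
    using arr_to_zero_exists[OF f'(1) zero_obj_in_ob[OF f(1)]] .
  have "g' = i \<cdot> g" by (rule arr_to_zero_unique[OF f'(1)]) (use f(1-7) f'(1-7) i assms(3) in simp_all)
  moreover have "h = h' \<cdot> i" by (rule arr_from_zero_unique[OF f(1)]) (use f(1-7) f'(1-7) i assms(4) in simp_all)
  ultimately have "h' \<cdot> g' = h \<cdot> g" using f f' i comp_assoc[of g i h'] by simp
  then show ?thesis using f(8) f'(8) by simp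
qed

lemma zero_arr_exists:
  assumes "a \<in> cOb C" "b \<in> cOb C"
  obtains f where "zero_arr C f" "cDom C f = a" "cCod C f = b"
proof -
  obtain z where z: "zero_obj C z" using zero_obj_exists ..
  obtain g where "g \<in> cAr C" "cDom C g = a" "cCod C g = z" using arr_to_zero_exists[OF z assms(1)] .
  moreover obtain h where "h \<in> cAr C" "cDom C h = z" "cCod C h = b" using arr_from_zero_exists[OF z assms(2)] .
  ultimately show ?thesis using that[of "h \<cdot> g"] zero_arrI[OF z] by simp
qed

lemma zero_arr_comp_left:
  assumes "zero_arr C f" "g \<in> cAr C" "cCod C f = cDom C g"
  shows "zero_arr C (g \<cdot> f)"
proof -
  obtain z u v where f: "zero_obj C z" "u \<in> cAr C" "v \<in> cAr C" "cDom C u = cDom C f" "cCod C u = z"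
    "cDom C v = z" "cCod C v = cCod C f" "v \<cdot> u = f" using assms(1) by (rule zero_arrE)
  then have "g \<cdot> f = (g \<cdot> v) \<cdot> u" using assms comp_assoc[of u v g] by simp
  then show ?thesis using zero_arrI[OF f(1,2), of "g \<cdot> v"] f assms by simp
qed

lemma zero_arr_comp_right:
  assumes "zero_arr C f" "g \<in> cAr C" "cCod C g = cDom C f"
  shows "zero_arr C (f \<cdot> g)"
proof -
  obtain z u v where f: "zero_obj C z" "u \<in> cAr C" "v \<in> cAr C" "cDom C u = cDom C f" "cCod C u = z"
    "cDom C v = z" "cCod C v = cCod C f" "v \<cdot> u = f" using assms(1) by (rule zero_arrE)
  then have "f \<cdot> g = v \<cdot> (u \<cdot> g)" using assms comp_assoc[of g u v] by simp
  then show ?thesis using zero_arrI[OF f(1) _ f(3), of "u \<cdot> g"] f assms by simp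
qed

lemma mono_comp_zero_iff:
  assumes m: "mono C m" and y: "y \<in> cAr C" "cCod C y = cDom C m"
  shows "zero_arr C (m \<cdot> y) \<longleftrightarrow> zero_arr C y"
proof
  have "m \<in> cAr C" using m unfolding mono_def by blast
  obtain y0 where y0: "zero_arr C y0" "cDom C y0 = cDom C y" "cCod C y0 = cCod C y"
    by (meson zero_arr_exists dom_in_ob cod_in_ob y(1))
  assume "zero_arr C (m \<cdot> y)"
  then have "m \<cdot> y0 = m \<cdot> y"
    by (intro zero_arr_unique zero_arr_comp_left[OF y0(1) \<open>m \<in> cAr C\<close>]) (use y y0 \<open>m \<in> cAr C\<close> in simp_all)
  then have "y0 = y" by (rule mono_cancel[OF m, rotated -1]) (use y y0 in simp_all)
  then show "zero_arr C y" using y0 by simp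
next
  assume "zero_arr C y"
  then show "zero_arr C (m \<cdot> y)" using zero_arr_comp_left m y unfolding mono_def by auto
qed

lemma epi_comp_zero_iff:
  assumes e: "epi C e" and y: "y \<in> cAr C" "cDom C y = cCod C e"
  shows "zero_arr C (y \<cdot> e) \<longleftrightarrow> zero_arr C y"
proof
  have "e \<in> cAr C" using e unfolding epi_def by blast
  obtain y0 where y0: "zero_arr C y0" "cDom C y0 = cDom C y" "cCod C y0 = cCod C y"
    by (meson zero_arr_exists dom_in_ob cod_in_ob y(1))
  assume "zero_arr C (y \<cdot> e)"
  then have "y0 \<cdot> e = y \<cdot> e"
    by (intro zero_arr_unique zero_arr_comp_right[OF y0(1) \<open>e \<in> cAr C\<close>]) (use y y0 \<open>e \<in> cAr C\<close> in simp_all)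
  then have "y0 = y" by (rule epi_cancel[OF e, rotated -1]) (use y y0 in simp_all)
  then show "zero_arr C y" using y0 by simp
next
  assume "zero_arr C y"
  then show "zero_arr C (y \<cdot> e)" using zero_arr_comp_right e y unfolding epi_def by auto
qed

lemma is_kernelD:
  assumes "is_kernel C k f"
  shows "k \<in> cAr C" "f \<in> cAr C" "cCod C k = cDom C f" "zero_arr C (f \<cdot> k)"
  using assms unfolding is_kernel_def by blast+

lemma is_cokernelD:
  assumes "is_cokernel C c f"
  shows "c \<in> cAr C" "f \<in> cAr C" "cDom C c = cCod C f" "zero_arr C (c \<cdot> f)"
  using assms unfolding is_cokernel_def by blast+

lemma kernel_lift_unique:
  "is_kernel C k f \<Longrightarrow> x \<in> cAr C \<Longrightarrow> cCod C x = cDom C f \<Longrightarrow> zero_arr C (f \<cdot> x) \<Longrightarrow>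
   \<exists>!u. u \<in> hom C (cDom C x) (cDom C k) \<and> k \<cdot> u = x"
  unfolding is_kernel_def by blast

lemma cokernel_desc_unique:
  "is_cokernel C c f \<Longrightarrow> x \<in> cAr C \<Longrightarrow> cDom C x = cCod C f \<Longrightarrow> zero_arr C (x \<cdot> f) \<Longrightarrow>
   \<exists>!u. u \<in> hom C (cCod C c) (cCod C x) \<and> u \<cdot> c = x"
  unfolding is_cokernel_def by blast

lemma kernel_lift:
  assumes "is_kernel C k f" "x \<in> cAr C" "cCod C x = cDom C f" "zero_arr C (f \<cdot> x)"
  obtains u where "u \<in> cAr C" "cDom C u = cDom C x" "cCod C u = cDom C k" "k \<cdot> u = x"
  using kernel_lift_unique[OF assms] unfolding hom_def by blast

lemma cokernel_desc:
  assumes "is_cokernel C c f" "x \<in> cAr C" "cDom C x = cCod C f" "zero_arr C (x \<cdot> f)"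
  obtains u where "u \<in> cAr C" "cDom C u = cCod C c" "cCod C u = cCod C x" "u \<cdot> c = x"
  using cokernel_desc_unique[OF assms] unfolding hom_def by blast

lemma kernel_is_mono:
  assumes k: "is_kernel C k f"
  shows "mono C k"
  unfolding mono_def
proof (intro conjI ballI impI)
  note kf = is_kernelD[OF k]
  show "k \<in> cAr C" by (fact kf(1))
  fix g h assume g: "g \<in> cAr C" and h: "h \<in> cAr C"
    and "cCod C g = cDom C k \<and> cCod C h = cDom C k \<and> cDom C g = cDom C h \<and> k \<cdot> g = k \<cdot> h"
  then have types: "cCod C g = cDom C k" "cCod C h = cDom C k" "cDom C g = cDom C h"
    and kgh: "k \<cdot> g = k \<cdot> h" by auto
  have "f \<cdot> (k \<cdot> g) = (f \<cdot> k) \<cdot> g" using comp_assoc[of g k f] kf g types by simp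
  then have "zero_arr C (f \<cdot> (k \<cdot> g))" using zero_arr_comp_right[OF kf(4) g] kf types by simp
  then have unique: "\<exists>!u. u \<in> hom C (cDom C (k \<cdot> g)) (cDom C k) \<and> k \<cdot> u = k \<cdot> g"
    by (rule kernel_lift_unique[OF k, rotated -1]) (use g kf types in simp_all)
  have "g \<in> hom C (cDom C (k \<cdot> g)) (cDom C k) \<and> k \<cdot> g = k \<cdot> g"
    and "h \<in> hom C (cDom C (k \<cdot> g)) (cDom C k) \<and> k \<cdot> h = k \<cdot> g"
    unfolding hom_def using g h kf types kgh by auto
  from this[THEN the1_equality[OF unique]] show "g = h" by simp
qed

lemma cokernel_is_epi:
  assumes c: "is_cokernel C c f"
  shows "epi C c"
  unfolding epi_def
proof (intro conjI ballI impI)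
  note cf = is_cokernelD[OF c]
  show "c \<in> cAr C" by (fact cf(1))
  fix g h assume g: "g \<in> cAr C" and h: "h \<in> cAr C"
    and "cDom C g = cCod C c \<and> cDom C h = cCod C c \<and> cCod C g = cCod C h \<and> g \<cdot> c = h \<cdot> c"
  then have types: "cDom C g = cCod C c" "cDom C h = cCod C c" "cCod C g = cCod C h"
    and gch: "g \<cdot> c = h \<cdot> c" by auto
  have "(g \<cdot> c) \<cdot> f = g \<cdot> (c \<cdot> f)" using comp_assoc[of f c g] cf g types by simp
  then have "zero_arr C ((g \<cdot> c) \<cdot> f)" using zero_arr_comp_left[OF cf(4) g] cf types by simp
  then have unique: "\<exists>!u. u \<in> hom C (cCod C c) (cCod C (g \<cdot> c)) \<and> u \<cdot> c = g \<cdot> c"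
    by (rule cokernel_desc_unique[OF c, rotated -1]) (use g cf types in simp_all)
  have "g \<in> hom C (cCod C c) (cCod C (g \<cdot> c)) \<and> g \<cdot> c = g \<cdot> c"
    and "h \<in> hom C (cCod C c) (cCod C (g \<cdot> c)) \<and> h \<cdot> c = g \<cdot> c"
    unfolding hom_def using g h cf types gch by auto
  from this[THEN the1_equality[OF unique]] show "g = h" by simp
qed

lemma kernel_cong:
  assumes "g \<in> cAr C" "g' \<in> cAr C" "cDom C g = cDom C g'"
    and "\<And>x. x \<in> cAr C \<Longrightarrow> cCod C x = cDom C g \<Longrightarrow> zero_arr C (g \<cdot> x) \<longleftrightarrow> zero_arr C (g' \<cdot> x)"
  shows "is_kernel C k g \<longleftrightarrow> is_kernel C k g'"
  unfolding is_kernel_def using assms by (smt (verit))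

lemma cokernel_cong:
  assumes "g \<in> cAr C" "g' \<in> cAr C" "cCod C g = cCod C g'"
    and "\<And>x. x \<in> cAr C \<Longrightarrow> cDom C x = cCod C g \<Longrightarrow> zero_arr C (x \<cdot> g) \<longleftrightarrow> zero_arr C (x \<cdot> g')"
  shows "is_cokernel C c g \<longleftrightarrow> is_cokernel C c g'"
  unfolding is_cokernel_def using assms by (smt (verit))

lemma kernel_comp_mono_iff:
  assumes m: "mono C m" and e: "e \<in> cAr C" "cCod C e = cDom C m"
  shows "is_kernel C k (m \<cdot> e) \<longleftrightarrow> is_kernel C k e"
proof -
  have "m \<in> cAr C" using m unfolding mono_def by blast
  have zero_iff: "zero_arr C ((m \<cdot> e) \<cdot> x) \<longleftrightarrow> zero_arr C (e \<cdot> x)"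
    if "x \<in> cAr C" "cCod C x = cDom C e" for x
  proof -
    have "m \<cdot> (e \<cdot> x) = (m \<cdot> e) \<cdot> x" using comp_assoc[of x e m] that e \<open>m \<in> cAr C\<close> by simp
    then show ?thesis using mono_comp_zero_iff[OF m, of "e \<cdot> x"] that e by simp
  qed
  show ?thesis by (rule kernel_cong) (use zero_iff e \<open>m \<in> cAr C\<close> in simp_all)
qed

lemma cokernel_comp_epi_iff:
  assumes e: "epi C e" and m: "m \<in> cAr C" "cCod C e = cDom C m"
  shows "is_cokernel C c (m \<cdot> e) \<longleftrightarrow> is_cokernel C c m"
proof -
  have "e \<in> cAr C" using e unfolding epi_def by blast
  have zero_iff: "zero_arr C (x \<cdot> (m \<cdot> e)) \<longleftrightarrow> zero_arr C (x \<cdot> m)"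
    if "x \<in> cAr C" "cDom C x = cCod C m" for x
  proof -
    have "(x \<cdot> m) \<cdot> e = x \<cdot> (m \<cdot> e)" using comp_assoc[of e m x] that m \<open>e \<in> cAr C\<close> by simp
    then show ?thesis using epi_comp_zero_iff[OF e, of "x \<cdot> m"] that m by simp
  qed
  show ?thesis by (rule cokernel_cong) (use zero_iff m \<open>e \<in> cAr C\<close> in simp_all)
qed

lemma mono_comp_eq_self:
  assumes "mono C m" "x \<in> cAr C" "cDom C x = cDom C m" "cCod C x = cDom C m" "m \<cdot> x = m"
  shows "x = cId C (cDom C m)"
proof -
  have "m \<in> cAr C" using assms(1) unfolding mono_def by blast
  show ?thesis by (rule mono_cancel[OF assms(1)]) (use assms \<open>m \<in> cAr C\<close> in simp_all)
qed

lemma epi_comp_eq_self: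
  assumes "epi C e" "x \<in> cAr C" "cDom C x = cCod C e" "cCod C x = cCod C e" "x \<cdot> e = e"
  shows "x = cId C (cCod C e)"
proof -
  have "e \<in> cAr C" using assms(1) unfolding epi_def by blast
  show ?thesis by (rule epi_cancel[OF assms(1)]) (use assms \<open>e \<in> cAr C\<close> in simp_all)
qed

lemma kernel_doms_isomorphic:
  assumes k: "is_kernel C k f" and k': "is_kernel C k' f"
  shows "isomorphic C (cDom C k) (cDom C k')"
proof -
  note kf = is_kernelD[OF k] and kf' = is_kernelD[OF k']
  obtain u where u: "u \<in> cAr C" "cDom C u = cDom C k" "cCod C u = cDom C k'" "k' \<cdot> u = k"
    using kernel_lift[OF k' kf(1,3,4)] by auto
  obtain v where v: "v \<in> cAr C" "cDom C v = cDom C k'" "cCod C v = cDom C k" "k \<cdot> v = k'"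
    using kernel_lift[OF k kf'(1,3,4)] by auto
  have "k \<cdot> (v \<cdot> u) = k" using comp_assoc[of u v k] u v kf by simp
  then have "v \<cdot> u = cId C (cDom C k)"
    by (rule mono_comp_eq_self[OF kernel_is_mono[OF k], rotated -1]) (use u v in simp_all)
  moreover have "k' \<cdot> (u \<cdot> v) = k'" using comp_assoc[of v u k'] u v kf' by simp
  then have "u \<cdot> v = cId C (cDom C k')"
    by (rule mono_comp_eq_self[OF kernel_is_mono[OF k'], rotated -1]) (use u v in simp_all)
  ultimately show ?thesis unfolding isomorphic_def hom_def using u v by blast
qed

lemma cokernel_cods_isomorphic:
  assumes c: "is_cokernel C c f" and c': "is_cokernel C c' f"
  shows "isomorphic C (cCod C c) (cCod C c')"
proof -
  note cf = is_cokernelD[OF c] and cf' = is_cokernelD[OF c']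
  obtain u where u: "u \<in> cAr C" "cDom C u = cCod C c" "cCod C u = cCod C c'" "u \<cdot> c = c'"
    using cokernel_desc[OF c cf'(1,3,4)] by auto
  obtain v where v: "v \<in> cAr C" "cDom C v = cCod C c'" "cCod C v = cCod C c" "v \<cdot> c' = c"
    using cokernel_desc[OF c' cf(1,3,4)] by auto
  have "(v \<cdot> u) \<cdot> c = c" using comp_assoc[of c u v] u v cf by simp
  then have "v \<cdot> u = cId C (cCod C c)"
    by (rule epi_comp_eq_self[OF cokernel_is_epi[OF c], rotated -1]) (use u v in simp_all)
  moreover have "(u \<cdot> v) \<cdot> c' = c'" using comp_assoc[of c' v u] u v cf' by simp
  then have "u \<cdot> v = cId C (cCod C c')"
    by (rule epi_comp_eq_self[OF cokernel_is_epi[OF c'], rotated -1]) (use u v in simp_all)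
  ultimately show ?thesis unfolding isomorphic_def hom_def using u v by blast
qed

lemma iso_is_kernel:
  assumes u: "u \<in> cAr C" "cDom C u = a" "cCod C u = b"
    and v: "v \<in> cAr C" "cDom C v = b" "cCod C v = a"
    and inverse: "v \<cdot> u = cId C a" "u \<cdot> v = cId C b"
    and t: "t \<in> cAr C" "cDom C t = b" "zero_arr C t"
  shows "is_kernel C u t"
  unfolding is_kernel_def
proof (intro conjI ballI impI)
  have b: "b \<in> cOb C" using u by auto
  fix x assume x: "x \<in> cAr C" "cCod C x = cDom C t \<and> zero_arr C (t \<cdot> x)"
  show "\<exists>!w. w \<in> hom C (cDom C x) (cDom C u) \<and> u \<cdot> w = x"
  proof
    have "u \<cdot> (v \<cdot> x) = (u \<cdot> v) \<cdot> x" using comp_assoc[of x v u] x u v t by simp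
    then show "v \<cdot> x \<in> hom C (cDom C x) (cDom C u) \<and> u \<cdot> (v \<cdot> x) = x"
      using x u v inverse b t unfolding hom_def by simp
    fix w assume w: "w \<in> hom C (cDom C x) (cDom C u) \<and> u \<cdot> w = x"
    then have "v \<cdot> (u \<cdot> w) = (v \<cdot> u) \<cdot> w" using comp_assoc[of w u v] u v unfolding hom_def by simp
    then show "w = v \<cdot> x" using w inverse u unfolding hom_def by auto
  qed
next
  show "zero_arr C (t \<cdot> u)" using zero_arr_comp_right[OF t(3) u(1)] u t by simp
qed (use u t in simp_all)

lemma arr_to_zero_is_cokernel:
  assumes z: "zero_obj C z" and t: "t \<in> cAr C" "cDom C t = b" "cCod C t = z"
    and u: "u \<in> cAr C" "cCod C u = b" and v: "v \<in> cAr C" "cDom C v = b" "cCod C v = cDom C u"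
    and right_inverse: "u \<cdot> v = cId C b"
  shows "is_cokernel C t u"
  unfolding is_cokernel_def
proof (intro conjI ballI impI)
  have "zero_arr C t" using zero_arr_if_cod_zero_obj[OF z t(1,3)] .
  fix x assume x: "x \<in> cAr C" "cDom C x = cCod C u \<and> zero_arr C (x \<cdot> u)"
  have "(x \<cdot> u) \<cdot> v = x \<cdot> (u \<cdot> v)" using comp_assoc[of v u x] x u v by simp
  then have "(x \<cdot> u) \<cdot> v = x" using right_inverse x u by simp
  moreover have "zero_arr C ((x \<cdot> u) \<cdot> v)" using zero_arr_comp_right[of "x \<cdot> u" v] x u v by simp
  ultimately have "zero_arr C x" by simp
  obtain s where s: "s \<in> cAr C" "cDom C s = z" "cCod C s = cCod C x"
    using arr_from_zero_exists[OF z cod_in_ob[OF x(1)]] .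
  have "zero_arr C (s \<cdot> t)" using zero_arr_comp_left[OF \<open>zero_arr C t\<close> s(1)] s t by simp
  then have "s \<cdot> t = x"
    by (rule zero_arr_unique[OF _ \<open>zero_arr C x\<close>]) (use s t x u in simp_all)
  show "\<exists>!w. w \<in> hom C (cCod C t) (cCod C x) \<and> w \<cdot> t = x"
  proof
    show "s \<in> hom C (cCod C t) (cCod C x) \<and> s \<cdot> t = x"
      using s t \<open>s \<cdot> t = x\<close> unfolding hom_def by simp
    fix w assume "w \<in> hom C (cCod C t) (cCod C x) \<and> w \<cdot> t = x"
    then have w: "w \<in> cAr C" "cDom C w = z" "cCod C w = cCod C x" using t unfolding hom_def by auto
    show "w = s" by (rule arr_from_zero_unique[OF z w(1) s(1)]) (use w s in simp_all)
  qed
next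
  show "zero_arr C (t \<cdot> u)"
    using zero_arr_comp_right[OF zero_arr_if_cod_zero_obj[OF z t(1,3)] u(1)] u t by simp
qed (use u t in simp_all)

lemma amplitude_sub_le: "amplitude C \<alpha> \<Longrightarrow> ses C f g \<Longrightarrow> \<alpha> (cDom C f) \<le> \<alpha> (cDom C g)"
  unfolding amplitude_def by blast

lemma amplitude_isomorphic_le:
  assumes "amplitude C \<alpha>" "isomorphic C a b"
  shows "\<alpha> a \<le> \<alpha> b"
proof -
  obtain u v where uv: "u \<in> hom C a b" "v \<in> hom C b a"
    and inverse: "v \<cdot> u = cId C a" "u \<cdot> v = cId C b"
    using assms(2) unfolding isomorphic_def by blast
  have u: "u \<in> cAr C" "cDom C u = a" "cCod C u = b"
    and v: "v \<in> cAr C" "cDom C v = b" "cCod C v = a"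
    using uv unfolding hom_def by auto
  obtain z where z: "zero_obj C z" using zero_obj_exists ..
  obtain t where t: "t \<in> cAr C" "cDom C t = cCod C u" "cCod C t = z"
    using arr_to_zero_exists[OF z cod_in_ob[OF u(1)]] .
  then have t': "t \<in> cAr C" "cDom C t = b" "cCod C t = z" using u by simp_all
  have "is_kernel C u t"
    using iso_is_kernel[OF u v inverse t'(1,2) zero_arr_if_cod_zero_obj[OF z t'(1,3)]] .
  moreover have "is_cokernel C t u"
    using arr_to_zero_is_cokernel[OF z t' u(1,3) v(1,2)] v(3) u(2) inverse(2) by simp
  ultimately have "ses C u t" unfolding ses_def ..
  then have "\<alpha> (cDom C u) \<le> \<alpha> (cDom C t)" by (rule amplitude_sub_le[OF assms(1)])
  then show ?thesis using u t by simp
qed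

lemma amplitude_isomorphic: "amplitude C \<alpha> \<Longrightarrow> isomorphic C a b \<Longrightarrow> \<alpha> a = \<alpha> b"
  by (meson amplitude_isomorphic_le antisym isomorphic_sym)

lemma arr_cost_eq:
  assumes "amplitude C \<alpha>" "is_kernel C k f" "is_cokernel C c f"
  shows "arr_cost C \<alpha> f = \<alpha> (cDom C k) + \<alpha> (cCod C c)"
proof -
  have "is_kernel C (SOME k. is_kernel C k f) f" using assms(2) by (rule someI)
  moreover have "is_cokernel C (SOME c. is_cokernel C c f) f" using assms(3) by (rule someI)
  ultimately have "\<alpha> (cDom C (SOME k. is_kernel C k f)) = \<alpha> (cDom C k)"
    and "\<alpha> (cCod C (SOME c. is_cokernel C c f)) = \<alpha> (cCod C c)"
    using amplitude_isomorphic[OF assms(1)] kernel_doms_isomorphic[OF _ assms(2)]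
      cokernel_cods_isomorphic[OF _ assms(3)] by blast+
  then show ?thesis unfolding arr_cost_def by simp
qed

lemma zigzag_exists:
  assumes "A \<in> cOb C" "B \<in> cOb C"
  shows "\<exists>xs gs. is_zigzag C A B xs gs"
proof -
  obtain z where z: "zero_obj C z" using zero_obj_exists ..
  obtain a b where "a \<in> cAr C" "cDom C a = A" "cCod C a = z" "b \<in> cAr C" "cDom C b = B" "cCod C b = z"
    using arr_to_zero_exists[OF z] assms by metis
  then have "is_zigzag C A B [A, z, B] [a, b]"
    unfolding is_zigzag_def by (auto simp: less_Suc_eq)
  then show ?thesis by blast
qed

end

section \<open>Image factorization in abelian categories\<close>

locale abelian_category =
  fixes C :: "('o,'m) cat"
  assumes abelian: "abelian C"

lemma pointed_category_if_abelian: "abelian C \<Longrightarrow> pointed_category C"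
  unfolding abelian_def pointed_category_def by blast

sublocale abelian_category \<subseteq> pointed_category
  by (rule pointed_category_if_abelian[OF abelian])

context abelian_category begin

lemma kernel_exists: "f \<in> cAr C \<Longrightarrow> \<exists>k. is_kernel C k f"
  and cokernel_exists: "f \<in> cAr C \<Longrightarrow> \<exists>c. is_cokernel C c f"
  and mono_is_kernel: "mono C m \<Longrightarrow> \<exists>g. is_kernel C m g"
  and epi_is_cokernel: "epi C e \<Longrightarrow> \<exists>g. is_cokernel C e g"
  using abelian unfolding abelian_def by blast+

lemma binary_product:
  assumes "A \<in> cOb C" "B \<in> cOb C"
  obtains P p1 p2 where "p1 \<in> hom C P A" "p2 \<in> hom C P B"
    and "\<And>X a b. a \<in> hom C X A \<Longrightarrow> b \<in> hom C X B \<Longrightarrow> \<exists>w. w \<in> hom C X P \<and> p1 \<cdot> w = a \<and> p2 \<cdot> w = b"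
    and "\<And>X w w'. w \<in> hom C X P \<Longrightarrow> w' \<in> hom C X P \<Longrightarrow> p1 \<cdot> w = p1 \<cdot> w' \<Longrightarrow> p2 \<cdot> w = p2 \<cdot> w' \<Longrightarrow> w = w'"
proof -
  have "has_binary_products C" using abelian unfolding abelian_def by blast
  then have "\<exists>P\<in>cOb C. \<exists>p1\<in>hom C P A. \<exists>p2\<in>hom C P B. \<forall>X\<in>cOb C. \<forall>a\<in>hom C X A. \<forall>b\<in>hom C X B.
    \<exists>!w. w \<in> hom C X P \<and> p1 \<cdot> w = a \<and> p2 \<cdot> w = b"
    using assms unfolding has_binary_products_def by simp
  then obtain P p1 p2 where p: "p1 \<in> hom C P A" "p2 \<in> hom C P B"
    and univ: "\<forall>X\<in>cOb C. \<forall>a\<in>hom C X A. \<forall>b\<in>hom C X B. \<exists>!w. w \<in> hom C X P \<and> p1 \<cdot> w = a \<and> p2 \<cdot> w = b"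
    by (elim bexE) (rule that)
  have "X \<in> cOb C" if "a \<in> hom C X A" for X a using that unfolding hom_def by auto
  then have univ': "\<exists>!w. w \<in> hom C X P \<and> p1 \<cdot> w = a \<and> p2 \<cdot> w = b"
    if "a \<in> hom C X A" "b \<in> hom C X B" for X a b using univ that by simp
  show ?thesis
  proof (rule that[OF p])
    show "\<exists>w. w \<in> hom C X P \<and> p1 \<cdot> w = a \<and> p2 \<cdot> w = b"
      if "a \<in> hom C X A" "b \<in> hom C X B" for X a b using univ'[OF that] by (rule ex1_implies_ex)
    show "w = w'"
      if w: "w \<in> hom C X P" "w' \<in> hom C X P" and eq: "p1 \<cdot> w = p1 \<cdot> w'" "p2 \<cdot> w = p2 \<cdot> w'" for X w w'
    proof -
      have "p1 \<cdot> w \<in> hom C X A" "p2 \<cdot> w \<in> hom C X B" using w p unfolding hom_def by auto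
      note unique = univ'[OF this]
      have "w \<in> hom C X P \<and> p1 \<cdot> w = p1 \<cdot> w \<and> p2 \<cdot> w = p2 \<cdot> w"
        and "w' \<in> hom C X P \<and> p1 \<cdot> w' = p1 \<cdot> w \<and> p2 \<cdot> w' = p2 \<cdot> w" using w eq by simp_all
      from this[THEN the1_equality[OF unique]] show "w = w'" by simp
    qed
  qed
qed

lemma square_product_diagonal:
  assumes Z: "Z \<in> cOb C"
  obtains P p1 p2 q where "p1 \<in> hom C P Z" "p2 \<in> hom C P Z"
    and "\<And>X a b. a \<in> hom C X Z \<Longrightarrow> b \<in> hom C X Z \<Longrightarrow> \<exists>w. w \<in> hom C X P \<and> p1 \<cdot> w = a \<and> p2 \<cdot> w = b"
    and "q \<in> cAr C" "cDom C q = P"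
    and "\<And>y. y \<in> cAr C \<Longrightarrow> cCod C y = P \<Longrightarrow> zero_arr C (q \<cdot> y) \<longleftrightarrow> p1 \<cdot> y = p2 \<cdot> y"
proof -
  obtain P p1 p2 where p1: "p1 \<in> hom C P Z" and p2: "p2 \<in> hom C P Z"
    and pair: "\<And>X a b. a \<in> hom C X Z \<Longrightarrow> b \<in> hom C X Z \<Longrightarrow> \<exists>w. w \<in> hom C X P \<and> p1 \<cdot> w = a \<and> p2 \<cdot> w = b"
    and pair_unique: "\<And>X w w'. w \<in> hom C X P \<Longrightarrow> w' \<in> hom C X P \<Longrightarrow>
      p1 \<cdot> w = p1 \<cdot> w' \<Longrightarrow> p2 \<cdot> w = p2 \<cdot> w' \<Longrightarrow> w = w'"
    by (rule binary_product[OF Z Z]) (rule that)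
  have p1a: "p1 \<in> cAr C" "cDom C p1 = P" "cCod C p1 = Z" and p2a: "p2 \<in> cAr C" "cDom C p2 = P" "cCod C p2 = Z"
    using p1 p2 unfolding hom_def by auto
  have "cId C Z \<in> hom C Z Z" using Z unfolding hom_def by simp
  then obtain d where "d \<in> hom C Z P" and d: "p1 \<cdot> d = cId C Z" "p2 \<cdot> d = cId C Z"
    using pair by blast
  then have da: "d \<in> cAr C" "cDom C d = Z" "cCod C d = P" unfolding hom_def by auto
  have "mono C d" by (rule mono_if_left_inverse[of d p1]) (use da p1a d in simp_all)
  then obtain q where q: "is_kernel C d q" using mono_is_kernel by blast
  note qf = is_kernelD[OF q]
  have "zero_arr C (q \<cdot> y) \<longleftrightarrow> p1 \<cdot> y = p2 \<cdot> y" if y: "y \<in> cAr C" "cCod C y = P" for y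
  proof
    assume "zero_arr C (q \<cdot> y)"
    then obtain t where t: "t \<in> cAr C" "cCod C t = Z" "d \<cdot> t = y"
      using kernel_lift[OF q y(1)] y(2) qf(3) da by auto
    then show "p1 \<cdot> y = p2 \<cdot> y" using comp_assoc[of t d p1] comp_assoc[of t d p2] da p1a p2a d by simp
  next
    assume "p1 \<cdot> y = p2 \<cdot> y"
    have "y = d \<cdot> (p1 \<cdot> y)"
      by (rule pair_unique) (use y da p1a p2a d \<open>p1 \<cdot> y = p2 \<cdot> y\<close> in \<open>simp_all add: hom_def comp_assoc\<close>)
    then have "q \<cdot> y = (q \<cdot> d) \<cdot> (p1 \<cdot> y)" using comp_assoc[of "p1 \<cdot> y" d q] y da p1a qf by simp
    then show "zero_arr C (q \<cdot> y)" using zero_arr_comp_right[OF qf(4), of "p1 \<cdot> y"] y da p1a qf by simp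
  qed
  moreover have "cDom C q = P" using qf(3) da(3) by simp
  ultimately show ?thesis using that[OF p1 p2 pair qf(2)] by blast
qed

lemma equalizer_exists:
  assumes u: "u \<in> hom C I Z" and v: "v \<in> hom C I Z"
  obtains g where "mono C g" "cCod C g = I" "u \<cdot> g = v \<cdot> g"
    and "\<And>x. x \<in> cAr C \<Longrightarrow> cCod C x = I \<Longrightarrow> u \<cdot> x = v \<cdot> x \<Longrightarrow>
      \<exists>y. y \<in> hom C (cDom C x) (cDom C g) \<and> g \<cdot> y = x"
proof -
  have ua: "u \<in> cAr C" "cDom C u = I" "cCod C u = Z" and va: "v \<in> cAr C" "cDom C v = I" "cCod C v = Z"
    using u v unfolding hom_def by auto
  have Z: "Z \<in> cOb C" using cod_in_ob[OF ua(1)] ua(3) by simp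
  obtain P p1 p2 q where p1: "p1 \<in> hom C P Z" and p2: "p2 \<in> hom C P Z"
    and pair: "\<And>X a b. a \<in> hom C X Z \<Longrightarrow> b \<in> hom C X Z \<Longrightarrow> \<exists>w. w \<in> hom C X P \<and> p1 \<cdot> w = a \<and> p2 \<cdot> w = b"
    and q: "q \<in> cAr C" "cDom C q = P"
    and diagonal: "\<And>y. y \<in> cAr C \<Longrightarrow> cCod C y = P \<Longrightarrow> zero_arr C (q \<cdot> y) \<longleftrightarrow> p1 \<cdot> y = p2 \<cdot> y"
    by (rule square_product_diagonal[OF Z]) (rule that)
  obtain w where "w \<in> hom C I P" and w: "p1 \<cdot> w = u" "p2 \<cdot> w = v" using pair[OF u v] by blast
  then have wa: "w \<in> cAr C" "cDom C w = I" "cCod C w = P" unfolding hom_def by auto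
  have equalizes_iff: "zero_arr C ((q \<cdot> w) \<cdot> x) \<longleftrightarrow> u \<cdot> x = v \<cdot> x"
    if x: "x \<in> cAr C" "cCod C x = I" for x
  proof -
    have "(q \<cdot> w) \<cdot> x = q \<cdot> (w \<cdot> x)" using comp_assoc[of x w q] x wa q by simp
    moreover have "p1 \<cdot> (w \<cdot> x) = u \<cdot> x" "p2 \<cdot> (w \<cdot> x) = v \<cdot> x"
      using comp_assoc[of x w p1] comp_assoc[of x w p2] x wa p1 p2 w unfolding hom_def by simp_all
    ultimately show ?thesis using diagonal[of "w \<cdot> x"] x wa by simp
  qed
  have qw: "q \<cdot> w \<in> cAr C" "cDom C (q \<cdot> w) = I" using q wa by simp_all
  obtain g where g: "is_kernel C g (q \<cdot> w)" using kernel_exists[OF qw(1)] by blast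
  note gf = is_kernelD[OF g]
  have gI: "cCod C g = I" using gf(3) qw(2) by simp
  show ?thesis
  proof (rule that[OF kernel_is_mono[OF g] gI])
    show "u \<cdot> g = v \<cdot> g" using equalizes_iff[OF gf(1) gI] gf(4) by simp
    fix x assume x: "x \<in> cAr C" "cCod C x = I" "u \<cdot> x = v \<cdot> x"
    then have "zero_arr C ((q \<cdot> w) \<cdot> x)" using equalizes_iff by simp
    then obtain y where "y \<in> cAr C" "cDom C y = cDom C x" "cCod C y = cDom C g" "g \<cdot> y = x"
      using kernel_lift[OF g x(1)] x(2) qw(2) by auto
    then show "\<exists>y. y \<in> hom C (cDom C x) (cDom C g) \<and> g \<cdot> y = x" unfolding hom_def by auto
  qed
qed

lemma image_is_minimal:
  assumes c: "is_cokernel C c f" and m: "is_kernel C m c"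
    and e: "e \<in> cAr C" "cCod C e = cDom C m" "m \<cdot> e = f"
    and g: "mono C g" "cCod C g = cDom C m"
    and e': "e' \<in> cAr C" "cCod C e' = cDom C g" "g \<cdot> e' = e"
  obtains s where "s \<in> cAr C" "cDom C s = cDom C m" "cCod C s = cDom C g" "g \<cdot> s = cId C (cDom C m)"
proof -
  have ga: "g \<in> cAr C" using g(1) unfolding mono_def by blast
  note mf = is_kernelD[OF m] and cf = is_cokernelD[OF c]
  have "mono C (m \<cdot> g)" using mono_comp[OF g(1) kernel_is_mono[OF m] g(2)] .
  then obtain h where h: "is_kernel C (m \<cdot> g) h" using mono_is_kernel by blast
  note hf = is_kernelD[OF h]
  have "h \<cdot> f = h \<cdot> (m \<cdot> (g \<cdot> e'))" using e(3) e'(3) by simp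
  also have "\<dots> = (h \<cdot> (m \<cdot> g)) \<cdot> e'"
    using e(1,2) e'(1,2) ga g(2) mf hf by (simp add: comp_assoc)
  finally have "h \<cdot> f = (h \<cdot> (m \<cdot> g)) \<cdot> e'" .
  then have "zero_arr C (h \<cdot> f)" using zero_arr_comp_right[OF hf(4) e'(1)] e'(1,2) ga g(2) mf hf by simp
  moreover have "cDom C h = cCod C f" using hf(3) ga g(2) mf(1,3) cf(3) by simp
  ultimately obtain h' where h': "h' \<in> cAr C" "cDom C h' = cCod C c" "h' \<cdot> c = h"
    using cokernel_desc[OF c hf(2)] by blast
  have "h \<cdot> m = h' \<cdot> (c \<cdot> m)" using comp_assoc[of m c h'] h' mf by simp
  then have "zero_arr C (h \<cdot> m)" using zero_arr_comp_left[OF mf(4) h'(1)] h' mf by simp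
  then obtain s where s: "s \<in> cAr C" "cDom C s = cDom C m" "cCod C s = cDom C g" "(m \<cdot> g) \<cdot> s = m"
    using kernel_lift[OF h mf(1)] hf(3) ga g(2) mf by auto
  have "m \<cdot> (g \<cdot> s) = m" using comp_assoc[of s g m] s ga g(2) mf by simp
  then have "g \<cdot> s = cId C (cDom C m)"
    by (rule mono_comp_eq_self[OF kernel_is_mono[OF m], rotated -1]) (use s ga g(2) mf in simp_all)
  with s show ?thesis using that by blast
qed

lemma epi_onto_image:
  assumes c: "is_cokernel C c f" and m: "is_kernel C m c"
    and e: "e \<in> cAr C" "cCod C e = cDom C m" "m \<cdot> e = f"
  shows "epi C e"
  unfolding epi_def
proof (intro conjI ballI impI)
  show "e \<in> cAr C" by (fact e(1))
  fix u v assume u: "u \<in> cAr C" and v: "v \<in> cAr C"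
    and "cDom C u = cCod C e \<and> cDom C v = cCod C e \<and> cCod C u = cCod C v \<and> u \<cdot> e = v \<cdot> e"
  then have types: "cDom C u = cDom C m" "cDom C v = cDom C m" "cCod C v = cCod C u"
    and eq: "u \<cdot> e = v \<cdot> e" using e by auto
  \<comment> \<open>\<open>e\<close> factors through the equalizer of \<open>u\<close> and \<open>v\<close>, which by minimality of the image is split epi\<close>
  have "u \<in> hom C (cDom C m) (cCod C u)" "v \<in> hom C (cDom C m) (cCod C u)"
    using u v types unfolding hom_def by auto
  then obtain g where g: "mono C g" "cCod C g = cDom C m" "u \<cdot> g = v \<cdot> g"
    and equalizes: "\<And>x. x \<in> cAr C \<Longrightarrow> cCod C x = cDom C m \<Longrightarrow> u \<cdot> x = v \<cdot> x \<Longrightarrow>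
      \<exists>y. y \<in> hom C (cDom C x) (cDom C g) \<and> g \<cdot> y = x"
    by (rule equalizer_exists) (rule that)
  obtain e' where "e' \<in> hom C (cDom C e) (cDom C g)" "g \<cdot> e' = e"
    using equalizes[OF e(1,2) eq] by blast
  then have e': "e' \<in> cAr C" "cCod C e' = cDom C g" "g \<cdot> e' = e" unfolding hom_def by auto
  obtain s where s: "s \<in> cAr C" "cDom C s = cDom C m" "cCod C s = cDom C g" "g \<cdot> s = cId C (cDom C m)"
    using image_is_minimal[OF c m e g(1,2) e'] .
  have ga: "g \<in> cAr C" using g(1) unfolding mono_def by blast
  have "u = u \<cdot> (g \<cdot> s)" using s u types by simp
  also have "\<dots> = (v \<cdot> g) \<cdot> s" using comp_assoc[of s g u] s ga u types g by simp
  also have "\<dots> = v \<cdot> (g \<cdot> s)" using comp_assoc[of s g v] s ga v types g by simp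
  also have "\<dots> = v" using s v types by simp
  finally show "u = v" .
qed

lemma epi_is_cokernel_of_kernel:
  assumes e: "epi C e" and k: "is_kernel C k e"
  shows "is_cokernel C e k"
proof -
  obtain k' where k': "is_cokernel C e k'" using epi_is_cokernel[OF e] by blast
  note kf = is_kernelD[OF k] and kf' = is_cokernelD[OF k']
  obtain t where t: "t \<in> cAr C" "cCod C t = cDom C k" "k \<cdot> t = k'"
    using kernel_lift[OF k kf'(2) kf'(3)[symmetric] kf'(4)] by blast
  have zero_iff: "zero_arr C (x \<cdot> k) \<longleftrightarrow> zero_arr C (x \<cdot> k')" if x: "x \<in> cAr C" "cDom C x = cCod C k" for x
  proof
    assume "zero_arr C (x \<cdot> k)"
    moreover have "x \<cdot> k' = (x \<cdot> k) \<cdot> t" using comp_assoc[of t k x] t x kf by simp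
    ultimately show "zero_arr C (x \<cdot> k')" using zero_arr_comp_right[of "x \<cdot> k" t] t x kf by simp
  next
    assume "zero_arr C (x \<cdot> k')"
    then obtain x' where x': "x' \<in> cAr C" "cDom C x' = cCod C e" "x' \<cdot> e = x"
      using cokernel_desc[OF k' x(1)] x kf kf' by auto
    have "x \<cdot> k = x' \<cdot> (e \<cdot> k)" using comp_assoc[of k e x'] x' kf by simp
    then show "zero_arr C (x \<cdot> k)" using zero_arr_comp_left[OF kf(4) x'(1)] x' kf by simp
  qed
  have "is_cokernel C e k \<longleftrightarrow> is_cokernel C e k'"
    by (rule cokernel_cong) (use kf kf' zero_iff in simp_all)
  with k' show ?thesis by simp
qed

lemma image_factorization:
  assumes f: "f \<in> cAr C" and k: "is_kernel C k f" and c: "is_cokernel C c f"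
  obtains m e where "e \<in> cAr C" "cCod C e = cDom C m" "m \<cdot> e = f" "ses C k e" "ses C m c"
proof -
  note cf = is_cokernelD[OF c]
  obtain m where m: "is_kernel C m c" using kernel_exists[OF cf(1)] by blast
  note mf = is_kernelD[OF m]
  obtain e where e: "e \<in> cAr C" "cCod C e = cDom C m" "m \<cdot> e = f"
    using kernel_lift[OF m f cf(3)[symmetric] cf(4)] by blast
  have epi: "epi C e" using epi_onto_image[OF c m e] .
  have "is_kernel C k e" using kernel_comp_mono_iff[OF kernel_is_mono[OF m] e(1,2)] k e(3) by simp
  moreover have "is_cokernel C c m" using cokernel_comp_epi_iff[OF epi mf(1) e(2)] c e(3) by simp
  ultimately have "ses C k e" "ses C m c" using epi_is_cokernel_of_kernel[OF epi] m unfolding ses_def by blast+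
  with e show ?thesis using that by blast
qed

end

section \<open>Exact functors and the path metric\<close>

lemma functor_arr:
  assumes "is_functor C D Fo Fm" "f \<in> cAr C"
  shows "Fm f \<in> cAr D" "cDom D (Fm f) = Fo (cDom C f)" "cCod D (Fm f) = Fo (cCod C f)"
  using assms unfolding is_functor_def hom_def by blast+

lemma functor_comp:
  "is_functor C D Fo Fm \<Longrightarrow> f \<in> cAr C \<Longrightarrow> g \<in> cAr C \<Longrightarrow> cCod C f = cDom C g \<Longrightarrow>
   Fm (cComp C g f) = cComp D (Fm g) (Fm f)"
  unfolding is_functor_def by blast

lemma exact_functor_preserves_kernel_cokernel:
  assumes "abelian C" "pointed_category D" and F: "exact_functor C D Fo Fm"
    and k: "is_kernel C k f" and c: "is_cokernel C c f"
  shows "is_kernel D (Fm k) (Fm f)" "is_cokernel D (Fm c) (Fm f)"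
proof -
  interpret C: abelian_category C by (fact abelian_category.intro[OF assms(1)])
  interpret D: pointed_category D by fact
  have F_functor: "is_functor C D Fo Fm" and exact: "\<And>a b. ses C a b \<Longrightarrow> ses D (Fm a) (Fm b)"
    using F unfolding exact_functor_def by blast+
  obtain m e where e: "e \<in> cAr C" "cCod C e = cDom C m" "cComp C m e = f" and "ses C k e" "ses C m c"
    using C.image_factorization[OF C.is_kernelD(2)[OF k] k c] by blast
  then have "ses D (Fm k) (Fm e)" "ses D (Fm m) (Fm c)" using exact by blast+
  then have Fk: "is_kernel D (Fm k) (Fm e)" and Fc: "is_cokernel D (Fm c) (Fm m)"
    and "mono D (Fm m)" "epi D (Fm e)"
    unfolding ses_def using D.kernel_is_mono D.cokernel_is_epi by blast+
  have m: "m \<in> cAr C" using \<open>ses C m c\<close> C.is_kernelD(1) unfolding ses_def by blast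
  have "Fm f = cComp D (Fm m) (Fm e)" using functor_comp[OF F_functor e(1) m e(2)] e(3) by simp
  moreover have "Fm e \<in> cAr D" "Fm m \<in> cAr D" "cCod D (Fm e) = cDom D (Fm m)"
    using functor_arr[OF F_functor e(1)] functor_arr[OF F_functor m] e(2) by simp_all
  ultimately show "is_kernel D (Fm k) (Fm f)" "is_cokernel D (Fm c) (Fm f)"
    using D.kernel_comp_mono_iff[OF \<open>mono D (Fm m)\<close>] D.cokernel_comp_epi_iff[OF \<open>epi D (Fm e)\<close>] Fk Fc
    by simp_all
qed

lemma arr_cost_exact_functor_le:
  assumes "abelian C" "pointed_category D" "amplitude C \<alpha>" "amplitude D \<alpha>'"
    and F: "exact_functor C D Fo Fm" and bound: "\<forall>X\<in>cOb C. \<alpha>' (Fo X) \<le> K * \<alpha> X"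
    and f: "f \<in> cAr C"
  shows "arr_cost D \<alpha>' (Fm f) \<le> K * arr_cost C \<alpha> f"
proof -
  interpret C: abelian_category C by (fact abelian_category.intro[OF assms(1)])
  interpret D: pointed_category D by fact
  have F_functor: "is_functor C D Fo Fm" using F unfolding exact_functor_def by blast
  obtain k c where k: "is_kernel C k f" and c: "is_cokernel C c f"
    using C.kernel_exists[OF f] C.cokernel_exists[OF f] by blast
  have "arr_cost D \<alpha>' (Fm f) = \<alpha>' (Fo (cDom C k)) + \<alpha>' (Fo (cCod C c))"
    using D.arr_cost_eq[OF assms(4) exact_functor_preserves_kernel_cokernel[OF assms(1,2) F k c]]
      functor_arr[OF F_functor C.is_kernelD(1)[OF k]] functor_arr[OF F_functor C.is_cokernelD(1)[OF c]]
    by simp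
  also have "\<dots> \<le> K * \<alpha> (cDom C k) + K * \<alpha> (cCod C c)"
    using bound C.is_kernelD(1)[OF k] C.is_cokernelD(1)[OF c] by (intro add_mono) simp_all
  also have "\<dots> = K * arr_cost C \<alpha> f"
    using C.arr_cost_eq[OF assms(3) k c] by (simp add: distrib_left)
  finally show ?thesis .
qed

lemma zigzag_functor_image:
  assumes F: "is_functor C D Fo Fm" and z: "is_zigzag C A B xs gs"
  shows "is_zigzag D (Fo A) (Fo B) (map Fo xs) (map Fm gs)"
  using z functor_arr[OF F] unfolding is_zigzag_def by auto

lemma zigzag_in_arr: "is_zigzag C A B xs gs \<Longrightarrow> g \<in> set gs \<Longrightarrow> g \<in> cAr C"
  unfolding is_zigzag_def by (auto simp: in_set_conv_nth)

lemma ennreal_mult_INF: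
  fixes c :: ennreal
  assumes "c < top" "I \<noteq> {}"
  shows "c * (INF i\<in>I. f i) = (INF i\<in>I. c * f i)"
proof -
  have "continuous_on UNIV ((*) c)"
    using ennreal_continuous_on_cmult[OF assms(1) continuous_on_id] by simp
  then have "continuous (at_right (Inf (f ` I))) ((*) c)"
    by (simp add: continuous_on_eq_continuous_at continuous_at_imp_continuous_at_within)
  \<comment> \<open>\<open>Fun.mono\<close>, since \<open>Defs.mono\<close> is the categorical notion\<close>
  moreover have "Fun.mono ((*) c)" by (simp add: monotone_def mult_left_mono)
  ultimately show ?thesis
    using continuous_at_Inf_mono[of "(*) c" "f ` I"] assms(2) by (simp add: image_comp)
qed

lemma path_dist_functor_le:
  assumes F: "is_functor C D Fo Fm" and "K < top" and "\<exists>xs gs. is_zigzag C A B xs gs"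
    and cost: "\<And>g. g \<in> cAr C \<Longrightarrow> arr_cost D \<alpha>' (Fm g) \<le> K * arr_cost C \<alpha> g"
  shows "path_dist D \<alpha>' (Fo A) (Fo B) \<le> K * path_dist C \<alpha> A B"
proof -
  let ?Z = "{gs. \<exists>xs. is_zigzag C A B xs gs}"
  have "path_dist D \<alpha>' (Fo A) (Fo B) \<le> (INF gs\<in>?Z. K * sum_list (map (arr_cost C \<alpha>) gs))"
    unfolding path_dist_def
  proof (rule INF_mono)
    fix gs assume "gs \<in> ?Z"
    then obtain xs where xs: "is_zigzag C A B xs gs" by blast
    have "sum_list (map (arr_cost D \<alpha>') (map Fm gs)) \<le> sum_list (map (\<lambda>g. K * arr_cost C \<alpha> g) gs)"
      using cost zigzag_in_arr[OF xs] by (simp add: sum_list_mono)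
    also have "\<dots> = K * sum_list (map (arr_cost C \<alpha>) gs)" by (rule sum_list_const_mult)
    finally show "\<exists>hs\<in>{hs. \<exists>ys. is_zigzag D (Fo A) (Fo B) ys hs}.
        sum_list (map (arr_cost D \<alpha>') hs) \<le> K * sum_list (map (arr_cost C \<alpha>) gs)"
      using zigzag_functor_image[OF F xs] by blast
  qed
  \<comment> \<open>needs a zigzag: without one, \<open>K = 0\<close> would give \<open>K * path_dist C \<alpha> A B = 0 * \<top> = 0\<close>\<close>
  also have "\<dots> = K * path_dist C \<alpha> A B"
    unfolding path_dist_def by (rule ennreal_mult_INF[OF assms(2), symmetric]) (use assms(3) in blast)
  finally show ?thesis .
qed

theorem mainTheorem10:
  fixes C :: "('o,'m) cat" and D :: "('p,'n) cat"
    and \<alpha> :: "'o \<Rightarrow> ennreal" and \<alpha>' :: "'p \<Rightarrow> ennreal"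
    and Fo :: "'o \<Rightarrow> 'p" and Fm :: "'m \<Rightarrow> 'n" and K :: real
  assumes "abelian C" and "abelian D"
    and "amplitude C \<alpha>" and "amplitude D \<alpha>'"
    and "exact_functor C D Fo Fm"
    and "K \<ge> 0"
    and "\<forall>X\<in>cOb C. \<alpha>' (Fo X) \<le> ennreal K * \<alpha> X"
    and "A \<in> cOb C" and "B \<in> cOb C"
  shows "path_dist D \<alpha>' (Fo A) (Fo B) \<le> ennreal K * path_dist C \<alpha> A B"
proof (rule path_dist_functor_le)
  interpret C: abelian_category C by (fact abelian_category.intro[OF assms(1)])
  have D: "pointed_category D" using pointed_category_if_abelian[OF assms(2)] .
  show "is_functor C D Fo Fm" using assms(5) unfolding exact_functor_def by blast
  show "ennreal K < top" by simp
  show "\<exists>xs gs. is_zigzag C A B xs gs" using C.zigzag_exists assms(8,9) .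
  show "arr_cost D \<alpha>' (Fm g) \<le> ennreal K * arr_cost C \<alpha> g" if "g \<in> cAr C" for g
    using arr_cost_exact_functor_le[OF assms(1) D assms(3,4,5,7) that] .
qed

end
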